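(* Let $\mathcal{N}$ be a non-degenerate GFNN with $D$-dimensional output, let $\rho$ be a nonlinearity, and let $A,B$ be disjoint sets of nodes of $\mathcal{N}$ with a common parent set such that $\mathcal{N}$ admits a $(\rho;A,B,C)$-modification. Then there exists a set $B^*\subset B$ such that $\mathcal{N}$ admits a non-degenerate $(\rho;A\cup B^*,B\setminus B^*,C)$-modification $\mathcal{N}'$.
   Context: A nonlinearity is a continuous $\rho:\mathbb{R}\to\mathbb{R}$ not of the form $t\mapsto at+b$. GFNN with $D$-dim output: $\mathcal{N}=(V,E,V_{\mathrm{in}},V_{\mathrm{out}},\Omega,\Theta,\Lambda)$, $(V,E)$ finite loopless DAG, $V_{\mathrm{in}}$ the parentless nodes, $V_{\mathrm{out}}\subset V\setminus V_{\mathrm{in}}$, nonzero real weights $\omega_{\tilde vv}$ on edges $(v,\tilde v)$, real biases $\theta_v$ on non-input nodes, real output scalars $\lambda^{(r)},\lambda^{(r)}_w$. $\mathrm{anc}(S)$: nodes with a directed path (length $\ge0$) into $S$. Non-degenerate: $V\setminus V_{\mathrm{in}}\subset\mathrm{anc}(V_{\mathrm{out}})$ and each $w\in V_{\mathrm{out}}$ has some $\lambda^{(r)}_w\ne0$. Affine symmetry of $\rho$: $(\zeta,\{(\alpha_s,\beta_s,\gamma_s)\}_{s\in\mathcal{I}})$, $\mathcal{I}$ nonempty finite, $\sum_s\alpha_s\rho(\beta_st+\gamma_s)=\zeta$ $\forall t$, no proper $\mathcal{I}'$ with $\{\rho(\beta_s\cdot+\gamma_s)\}_{\mathcal{I}'}\cup\{\mathbf1\}$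 linearly dependent. Irreducible: there is no nonempty $U$ with common parent set $P_U$, nonzero $\kappa_v,\beta_u$ with $\omega_{uv}=\beta_u\kappa_v$, and $\zeta$, nonzero $\alpha_u$ with $(\zeta,\{(\alpha_u,\beta_u,\theta_u)\}_{u\in U})$ an affine symmetry. $(\rho;A,B,C)$-modification of an irreducible $\mathcal{N}$: $A,B\subset V\setminus V_{\mathrm{in}}$ disjoint, $A\ne\varnothing$, common parent set $P$, $W=\{w:\mathrm{par}(w)\cap A\ne\varnothing\}$, $C=\{u'_1,\dots,u'_n\}$ ($n\ge1$) new nodes; require (i) an affine symmetry $(\zeta,\{(\alpha_u,\beta_u,\theta_u)\}_{u\in A\cup B}\cup\{(\alpha'_p,\beta'_p,\gamma'_p)\}_{p=1}^n)$; (ii) nonzero $\kappa_v$ with $\omega_{uv}=\beta_u\kappa_v$ ($u\in A\cup B,v\in P$); (iii) $A\subset\mathrm{par}(w)$ for $w\in W$, nonzero $\nu_w$ with $\omega_{wu}=\nu_w\alpha_u$; (iv) $A\cap V_{\mathrm{out}}=\varnothing$, or $A\subset V_{\mathrm{out}}$ with reals $\mu_r$, $\lambda^{(r)}_u=\mu_r\alpha_u$. Then: delete $A$ and incident edges; add $C$ with edges $(v,u'_p)$ of weight $\beta'_p\kappa_v$, bias $\gamma'_p$, edges $(u'_p,w)$ of weight $-\alpha'_p\nu_w$; $\theta_w\mapsto\theta_w+\zeta\nu_w$; for $w\in W,u\in B$: add edge with weight $-\alpha_u\nu_w$ if absent, else $\omega_{wu}\mapsto\omega_{wu}-\alpha_u\nu_w$,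 deleting the edge if $0$. If $A\subset V_{\mathrm{out}}$: $\lambda^{(r)}\mapsto\lambda^{(r)}+\zeta\mu_r$, $\lambda^{(r)}_{u'_p}=-\alpha'_p\mu_r$, for $u\in B$ $\lambda^{(r)}_u$ ($0$ if $u\notin V_{\mathrm{out}}$) $\mapsto\lambda^{(r)}_u-\alpha_u\mu_r$, new output set $(V_{\mathrm{out}}\setminus(A\cup B))\cup C\cup\{u\in B:\text{some new }\lambda^{(r)}_u\ne0\}$; else outputs unchanged. $\mathcal{N}$ admits a $(\rho;A,B,C)$-modification if such data exist. *)

theory Defs
  imports Complex_Main
begin

(* Edge (v, v') \<in> edges carries weight  weight N v' v  (= omega_{v' v}).
   Output r (r < D) has bias  out_bias N r  (= lambda^{(r)}) and scalars
   out_weight N r w  (= lambda^{(r)}_w) for w \<in> outputs N.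
   Values of weight/bias/out_weight outside their meaningful domain are junk. *)
record 'v gfnn =
  nodes      :: "'v set"
  edges      :: "('v \<times> 'v) set"
  inputs     :: "'v set"
  outputs    :: "'v set"
  weight     :: "'v \<Rightarrow> 'v \<Rightarrow> real"
  bias       :: "'v \<Rightarrow> real"
  out_bias   :: "nat \<Rightarrow> real"
  out_weight :: "nat \<Rightarrow> 'v \<Rightarrow> real"

definition nonlinearity :: "(real \<Rightarrow> real) \<Rightarrow> bool" where
  "nonlinearity \<rho> \<longleftrightarrow> continuous_on UNIV \<rho> \<and> \<not> (\<exists>a b. \<forall>t. \<rho> t = a * t + b)"

definition par :: "'v gfnn \<Rightarrow> 'v \<Rightarrow> 'v set" where
  "par N v = {u. (u, v) \<in> edges N}"

definition anc :: "'v gfnn \<Rightarrow> 'v set \<Rightarrow> 'v set" where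
  "anc N S = {v. \<exists>s\<in>S. (v, s) \<in> (edges N)\<^sup>*}"

definition is_gfnn :: "'v gfnn \<Rightarrow> bool" where
  "is_gfnn N \<longleftrightarrow>
     finite (nodes N) \<and>
     edges N \<subseteq> nodes N \<times> nodes N \<and>
     (\<forall>v. (v, v) \<notin> edges N) \<and>
     acyclic (edges N) \<and>
     inputs N = {v \<in> nodes N. par N v = {}} \<and>
     outputs N \<subseteq> nodes N - inputs N \<and>
     (\<forall>(v, u) \<in> edges N. weight N u v \<noteq> 0)"

definition non_degenerate :: "nat \<Rightarrow> 'v gfnn \<Rightarrow> bool" where
  "non_degenerate D N \<longleftrightarrow>
     is_gfnn N \<and>
     nodes N - inputs N \<subseteq> anc N (outputs N) \<and>
     (\<forall>w \<in> outputs N. \<exists>r<D. out_weight N r w \<noteq> 0)"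

(* affine symmetry (zeta, {(alpha_s, beta_s, gamma_s)}_{s \<in> I}) of rho;
   linear dependence is of the indexed family {rho(beta_s . + gamma_s)}_{s\<in>I'} together with 1 *)
definition affine_symmetry ::
  "(real \<Rightarrow> real) \<Rightarrow> real \<Rightarrow> 'i set \<Rightarrow> ('i \<Rightarrow> real) \<Rightarrow> ('i \<Rightarrow> real) \<Rightarrow> ('i \<Rightarrow> real) \<Rightarrow> bool" where
  "affine_symmetry \<rho> \<zeta> I \<alpha> \<beta> \<gamma> \<longleftrightarrow>
     finite I \<and> I \<noteq> {} \<and>
     (\<forall>t. (\<Sum>s\<in>I. \<alpha> s * \<rho> (\<beta> s * t + \<gamma> s)) = \<zeta>) \<and>
     \<not> (\<exists>I' \<subset> I. \<exists>c c0. (c0 \<noteq> 0 \<or> (\<exists>s\<in>I'. c s \<noteq> 0)) \<and>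
           (\<forall>t. (\<Sum>s\<in>I'. c s * \<rho> (\<beta> s * t + \<gamma> s)) + c0 = 0))"

definition irreducible :: "(real \<Rightarrow> real) \<Rightarrow> 'v gfnn \<Rightarrow> bool" where
  "irreducible \<rho> N \<longleftrightarrow>
     \<not> (\<exists>U P \<kappa> \<beta> \<zeta> \<alpha>.
          U \<noteq> {} \<and> U \<subseteq> nodes N - inputs N \<and>
          (\<forall>u\<in>U. par N u = P) \<and>
          (\<forall>v\<in>P. \<kappa> v \<noteq> 0) \<and> (\<forall>u\<in>U. \<beta> u \<noteq> 0) \<and>
          (\<forall>u\<in>U. \<forall>v\<in>P. weight N u v = \<beta> u * \<kappa> v) \<and>
          (\<forall>u\<in>U. \<alpha> u \<noteq> 0) \<and>
          affine_symmetry \<rho> \<zeta> U \<alpha> \<beta> (bias N))"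

definition childs :: "'v gfnn \<Rightarrow> 'v set \<Rightarrow> 'v set" where
  "childs N A = {w. par N w \<inter> A \<noteq> {}}"

(* The network produced by the modification with given data.  The parameters
   (alpha'_p, beta'_p, gamma'_p) of the new node u'_p \<in> C are  alpha u'_p, beta u'_p, gamma u'_p. *)
definition modify ::
  "nat \<Rightarrow> 'v gfnn \<Rightarrow> 'v set \<Rightarrow> 'v set \<Rightarrow> 'v set \<Rightarrow> 'v set \<Rightarrow> real \<Rightarrow>
   ('v \<Rightarrow> real) \<Rightarrow> ('v \<Rightarrow> real) \<Rightarrow> ('v \<Rightarrow> real) \<Rightarrow> ('v \<Rightarrow> real) \<Rightarrow> ('v \<Rightarrow> real) \<Rightarrow> (nat \<Rightarrow> real)
   \<Rightarrow> 'v gfnn" where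
  "modify D N A B C P \<zeta> \<alpha> \<beta> \<gamma> \<kappa> \<nu> \<mu> =
    (let W = childs N A;
         V' = (nodes N - A) \<union> C;
         E' = {(x, y). ((x, y) \<in> edges N \<and> x \<notin> A \<and> y \<notin> A \<and> \<not> (x \<in> B \<and> y \<in> W))
                     \<or> (x \<in> P \<and> y \<in> C) \<or> (x \<in> C \<and> y \<in> W)
                     \<or> (x \<in> B \<and> y \<in> W \<and> ((x, y) \<in> edges N \<longrightarrow> weight N y x - \<alpha> x * \<nu> y \<noteq> 0))};
         wt' = (\<lambda>y x. if x \<in> C \<and> y \<in> W then - \<alpha> x * \<nu> y
                      else if y \<in> C then \<beta> y * \<kappa> x
                      else if x \<in> B \<and> y \<in> W then
                        (if (x, y) \<in> edges N then weight N y x else 0) - \<alpha> x * \<nu> y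
                      else weight N y x);
         th' = (\<lambda>w. if w \<in> W then bias N w + \<zeta> * \<nu> w
                    else if w \<in> C then \<gamma> w else bias N w);
         outA = (A \<subseteq> outputs N);
         lb' = (\<lambda>r. if outA then out_bias N r + \<zeta> * \<mu> r else out_bias N r);
         lw' = (\<lambda>r u. if outA then
                        (if u \<in> C then - \<alpha> u * \<mu> r
                         else if u \<in> B then (if u \<in> outputs N then out_weight N r u else 0) - \<alpha> u * \<mu> r
                         else out_weight N r u)
                      else out_weight N r u);
         O' = (if outA then (outputs N - (A \<union> B)) \<union> C \<union> {u \<in> B. \<exists>r<D. lw' r u \<noteq> 0}
               else outputs N)
     in \<lparr> nodes = V', edges = E', inputs = {v \<in> V'. \<forall>u. (u, v) \<notin> E'},
          outputs = O', weight = wt', bias = th', out_bias = lb', out_weight = lw' \<rparr>)"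

definition is_modification ::
  "(real \<Rightarrow> real) \<Rightarrow> nat \<Rightarrow> 'v gfnn \<Rightarrow> 'v set \<Rightarrow> 'v set \<Rightarrow> 'v set \<Rightarrow> 'v gfnn \<Rightarrow> bool" where
  "is_modification \<rho> D N A B C N' \<longleftrightarrow>
     irreducible \<rho> N \<and>
     A \<subseteq> nodes N - inputs N \<and> B \<subseteq> nodes N - inputs N \<and> A \<inter> B = {} \<and> A \<noteq> {} \<and>
     finite C \<and> C \<noteq> {} \<and> C \<inter> nodes N = {} \<and>
     (\<exists>P \<zeta> \<alpha> \<beta> \<gamma> \<kappa> \<nu> \<mu>.
        (\<forall>u \<in> A \<union> B. par N u = P) \<and>
        \<comment> \<open>(i)\<close>
        (\<forall>u \<in> A \<union> B. \<gamma> u = bias N u) \<and>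
        affine_symmetry \<rho> \<zeta> (A \<union> B \<union> C) \<alpha> \<beta> \<gamma> \<and>
        \<comment> \<open>(ii)\<close>
        (\<forall>v \<in> P. \<kappa> v \<noteq> 0) \<and>
        (\<forall>u \<in> A \<union> B. \<forall>v \<in> P. weight N u v = \<beta> u * \<kappa> v) \<and>
        \<comment> \<open>(iii)\<close>
        (\<forall>w \<in> childs N A. A \<subseteq> par N w \<and> \<nu> w \<noteq> 0 \<and> (\<forall>u \<in> A. weight N w u = \<nu> w * \<alpha> u)) \<and>
        \<comment> \<open>(iv)\<close>
        (A \<inter> outputs N = {} \<or>
         (A \<subseteq> outputs N \<and> (\<forall>r<D. \<forall>u \<in> A. out_weight N r u = \<mu> r * \<alpha> u))) \<and>
        N' = modify D N A B C P \<zeta> \<alpha> \<beta> \<gamma> \<kappa> \<nu> \<mu>)"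

definition admits_modification ::
  "(real \<Rightarrow> real) \<Rightarrow> nat \<Rightarrow> 'v gfnn \<Rightarrow> 'v set \<Rightarrow> 'v set \<Rightarrow> 'v set \<Rightarrow> bool" where
  "admits_modification \<rho> D N A B C \<longleftrightarrow> (\<exists>N'. is_modification \<rho> D N A B C N')"

end

theory Submission
  imports Defs
begin

(* Call u \<in> B absorbable if the modification cancels every outgoing weight and every output
   scalar of u: its children all lie in the children set W of A, with weights nu_w alpha_u, and
   on the output side it looks like a node of A scaled by alpha_u.  Such a node becomes dead in
   the modified network.  Moving all absorbable nodes from B into A leaves W, and hence all the
   data of the modification, unchanged.  After that, every non-input node of the modified network
   has a child or is an output: a new node of C feeds into W (or is an output when W is empty), a
   node of B keeps an uncancelled edge or a nonzero output scalar, and any other node keeps its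
   old path to an output, rerouted through C where that path used to enter A.  The coefficients
   alpha on A are nonzero by non-degeneracy of N, and hence alpha on B and C and beta on C are
   nonzero by minimality of the affine symmetry. *)

lemma card_ancestors_less:
  assumes "finite E" "acyclic E" "(x, y) \<in> E"
  shows "card {z. (z, x) \<in> E\<^sup>+} < card {z. (z, y) \<in> E\<^sup>+}"
proof (rule psubset_card_mono)
  have "{z. (z, y) \<in> E\<^sup>+} \<subseteq> fst ` E\<^sup>+" by force
  then show "finite {z. (z, y) \<in> E\<^sup>+}"
    using assms(1) by (meson finite_imageI finite_subset finite_trancl)
  have "(x, y) \<in> E\<^sup>+" "(x, x) \<notin> E\<^sup>+" using assms(2,3) by (auto simp: acyclic_def)
  then show "{z. (z, x) \<in> E\<^sup>+} \<subset> {z. (z, y) \<in> E\<^sup>+}"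
    using assms(3) by (auto intro: trancl_into_trancl)
qed

lemma ancestors_eq_if_parents_eq:
  assumes "{z. (z, u) \<in> E} = {z. (z, v) \<in> E}"
  shows "{z. (z, u) \<in> E\<^sup>+} = {z. (z, v) \<in> E\<^sup>+}"
proof -
  have "{z. (z, w) \<in> E\<^sup>+} = {z. \<exists>p. (p, w) \<in> E \<and> (z, p) \<in> E\<^sup>*}" for w
    by (auto dest: tranclD2 intro: rtrancl_into_trancl1)
  then show ?thesis using assms by auto
qed

lemma finite_acyclic_reaches:
  assumes "finite E" "acyclic E"
    and successor: "\<And>x. x \<in> S \<Longrightarrow> x \<notin> T \<Longrightarrow> \<exists>y\<in>S. (x, y) \<in> E"
    and "x \<in> S"
  shows "\<exists>t\<in>T. (x, t) \<in> E\<^sup>*"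
  using \<open>x \<in> S\<close>
proof (induction x rule: wf_induct_rule[OF finite_acyclic_wf_converse[OF assms(1,2)]])
  case (1 x)
  show ?case
  proof (cases "x \<in> T")
    case False
    then obtain y where "y \<in> S" "(x, y) \<in> E" using successor "1.prems" by blast
    moreover from this obtain t where "t \<in> T" "(y, t) \<in> E\<^sup>*" using "1.IH" by blast
    ultimately show ?thesis by (meson converse_rtrancl_into_rtrancl)
  qed blast
qed

lemma affine_symmetry_minimal:
  assumes "affine_symmetry \<rho> \<zeta> I \<alpha> \<beta> \<gamma>" "I' \<subset> I"
    and "\<And>x. (\<Sum>i\<in>I'. c i * \<rho> (\<beta> i * x + \<gamma> i)) + d = 0"
    and "i \<in> I'"
  shows "c i = 0"
  using assms unfolding affine_symmetry_def by blast

lemma affine_symmetry_coeff_nonzero: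
  assumes sym: "affine_symmetry \<rho> \<zeta> I \<alpha> \<beta> \<gamma>" and "s \<in> I" "t \<in> I" "t \<noteq> s" "\<alpha> t \<noteq> 0"
  shows "\<alpha> s \<noteq> 0"
proof
  assume "\<alpha> s = 0"
  have "finite I" "\<And>x. (\<Sum>i\<in>I. \<alpha> i * \<rho> (\<beta> i * x + \<gamma> i)) = \<zeta>"
    using sym unfolding affine_symmetry_def by auto
  then have "(\<Sum>i\<in>I - {s}. \<alpha> i * \<rho> (\<beta> i * x + \<gamma> i)) + - \<zeta> = 0" for x
    using \<open>s \<in> I\<close> \<open>\<alpha> s = 0\<close> by (simp add: sum.remove)
  moreover have "I - {s} \<subset> I" "t \<in> I - {s}" using assms(2-4) by auto
  ultimately show False using affine_symmetry_minimal[OF sym] \<open>\<alpha> t \<noteq> 0\<close> by blast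
qed

lemma affine_symmetry_slope_nonzero:
  assumes sym: "affine_symmetry \<rho> \<zeta> I \<alpha> \<beta> \<gamma>" and "s \<in> I" "t \<in> I" "t \<noteq> s"
  shows "\<beta> s \<noteq> 0"
proof
  assume "\<beta> s = 0"
  have "{s} \<subset> I" using assms(2-4) by auto
  have "(1::real) = 0"
    by (rule affine_symmetry_minimal[OF sym \<open>{s} \<subset> I\<close>, where c = "\<lambda>_. 1" and i = s and d = "- \<rho> (\<gamma> s)"])
      (simp_all add: \<open>\<beta> s = 0\<close>)
  then show False by simp
qed

lemma output_if_childless:
  assumes "non_degenerate D N" "v \<in> nodes N - inputs N" "\<And>y. (v, y) \<notin> edges N"
  shows "v \<in> outputs N"
proof -
  obtain s where "s \<in> outputs N" "(v, s) \<in> (edges N)\<^sup>*"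
    using assms(1,2) unfolding non_degenerate_def anc_def by blast
  then show ?thesis using assms(3) by (metis converse_rtranclE)
qed

locale modification_data =
  fixes \<rho> :: "real \<Rightarrow> real" and D :: nat and N :: "'v gfnn" and A B C P :: "'v set"
    and \<zeta> :: real and \<alpha> \<beta> \<gamma> \<kappa> \<nu> :: "'v \<Rightarrow> real" and \<mu> :: "nat \<Rightarrow> real"
  assumes N_irreducible: "irreducible \<rho> N"
    and A_sub: "A \<subseteq> nodes N - inputs N" and B_sub: "B \<subseteq> nodes N - inputs N"
    and AB_disjoint: "A \<inter> B = {}" and A_nonempty: "A \<noteq> {}"
    and finite_C: "finite C" and C_nonempty: "C \<noteq> {}" and C_fresh: "C \<inter> nodes N = {}"
    and par_AB: "\<And>u. u \<in> A \<union> B \<Longrightarrow> par N u = P"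
    and bias_AB: "\<And>u. u \<in> A \<union> B \<Longrightarrow> \<gamma> u = bias N u"
    and symmetry: "affine_symmetry \<rho> \<zeta> (A \<union> B \<union> C) \<alpha> \<beta> \<gamma>"
    and kappa_nonzero: "\<And>v. v \<in> P \<Longrightarrow> \<kappa> v \<noteq> 0"
    and weight_AB: "\<And>u v. u \<in> A \<union> B \<Longrightarrow> v \<in> P \<Longrightarrow> weight N u v = \<beta> u * \<kappa> v"
    and childs_A: "\<And>w. w \<in> childs N A \<Longrightarrow>
                     A \<subseteq> par N w \<and> \<nu> w \<noteq> 0 \<and> (\<forall>u\<in>A. weight N w u = \<nu> w * \<alpha> u)"
    and outputs_A: "A \<inter> outputs N = {} \<or>
                    A \<subseteq> outputs N \<and> (\<forall>r<D. \<forall>u\<in>A. out_weight N r u = \<mu> r * \<alpha> u)"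

lemma is_modification_iff:
  "is_modification \<rho> D N A B C N' \<longleftrightarrow>
     (\<exists>P \<zeta> \<alpha> \<beta> \<gamma> \<kappa> \<nu> \<mu>. modification_data \<rho> D N A B C P \<zeta> \<alpha> \<beta> \<gamma> \<kappa> \<nu> \<mu> \<and>
        N' = modify D N A B C P \<zeta> \<alpha> \<beta> \<gamma> \<kappa> \<nu> \<mu>)"
  unfolding is_modification_def modification_data_def by (simp only: Ball_def ex_simps all_simps conj_assoc)

definition absorbable ::
  "nat \<Rightarrow> 'v gfnn \<Rightarrow> 'v set \<Rightarrow> ('v \<Rightarrow> real) \<Rightarrow> ('v \<Rightarrow> real) \<Rightarrow> (nat \<Rightarrow> real) \<Rightarrow> 'v \<Rightarrow> bool" where
  "absorbable D N A \<alpha> \<nu> \<mu> u \<longleftrightarrow>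
     (\<forall>y. (u, y) \<in> edges N \<longrightarrow> y \<in> childs N A) \<and>
     (\<forall>w\<in>childs N A. (u, w) \<in> edges N \<and> weight N w u = \<nu> w * \<alpha> u) \<and>
     (if A \<subseteq> outputs N then u \<in> outputs N \<and> (\<forall>r<D. out_weight N r u = \<mu> r * \<alpha> u)
      else u \<notin> outputs N)"

context modification_data
begin

lemma childs_absorb:
  assumes "\<forall>u\<in>Bs. absorbable D N A \<alpha> \<nu> \<mu> u"
  shows "childs N (A \<union> Bs) = childs N A"
  using assms unfolding absorbable_def childs_def par_def by blast

lemma outputs_absorb:
  assumes "\<forall>u\<in>Bs. absorbable D N A \<alpha> \<nu> \<mu> u"
  shows "A \<union> Bs \<subseteq> outputs N \<longleftrightarrow> A \<subseteq> outputs N"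
  using assms unfolding absorbable_def by auto

lemma absorbable_absorb:
  assumes "\<forall>u\<in>Bs. absorbable D N A \<alpha> \<nu> \<mu> u"
  shows "absorbable D N (A \<union> Bs) \<alpha> \<nu> \<mu> u \<longleftrightarrow> absorbable D N A \<alpha> \<nu> \<mu> u"
  unfolding absorbable_def childs_absorb[OF assms] outputs_absorb[OF assms] ..

lemma modification_data_absorb:
  assumes "Bs \<subseteq> B" and absorbable: "\<forall>u\<in>Bs. absorbable D N A \<alpha> \<nu> \<mu> u"
  shows "modification_data \<rho> D N (A \<union> Bs) (B - Bs) C P \<zeta> \<alpha> \<beta> \<gamma> \<kappa> \<nu> \<mu>"
proof -
  have AB: "A \<union> Bs \<union> (B - Bs) = A \<union> B" using assms(1) by blast
  show ?thesis
  proof unfold_locales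
    show "A \<union> Bs \<subseteq> nodes N - inputs N" "B - Bs \<subseteq> nodes N - inputs N"
      using A_sub B_sub assms(1) by auto
    show "(A \<union> Bs) \<inter> (B - Bs) = {}" using AB_disjoint by blast
    show "par N u = P" "\<gamma> u = bias N u" if "u \<in> A \<union> Bs \<union> (B - Bs)" for u
      using par_AB bias_AB that unfolding AB by auto
    show "affine_symmetry \<rho> \<zeta> (A \<union> Bs \<union> (B - Bs) \<union> C) \<alpha> \<beta> \<gamma>"
      using symmetry unfolding AB .
    show "weight N u v = \<beta> u * \<kappa> v" if "u \<in> A \<union> Bs \<union> (B - Bs)" "v \<in> P" for u v
      using weight_AB that unfolding AB by auto
    show "A \<union> Bs \<subseteq> par N w \<and> \<nu> w \<noteq> 0 \<and> (\<forall>u\<in>A \<union> Bs. weight N w u = \<nu> w * \<alpha> u)"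
      if "w \<in> childs N (A \<union> Bs)" for w
      using childs_A absorbable that unfolding childs_absorb[OF absorbable]
      by (auto simp: absorbable_def par_def)
    show "(A \<union> Bs) \<inter> outputs N = {} \<or>
      A \<union> Bs \<subseteq> outputs N \<and> (\<forall>r<D. \<forall>u\<in>A \<union> Bs. out_weight N r u = \<mu> r * \<alpha> u)"
      using outputs_A absorbable unfolding absorbable_def by (cases "A \<subseteq> outputs N") auto
  qed (use N_irreducible A_nonempty finite_C C_nonempty C_fresh kappa_nonzero in simp_all)
qed

end

locale nondegenerate_modification = modification_data +
  assumes nondeg: "non_degenerate D N"
begin

lemma
  shows finite_nodes: "finite (nodes N)"
    and edges_sub: "edges N \<subseteq> nodes N \<times> nodes N"
    and no_loop: "(v, v) \<notin> edges N"
    and acyclic_edges: "acyclic (edges N)"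
    and inputs_eq: "inputs N = {v \<in> nodes N. par N v = {}}"
    and outputs_sub: "outputs N \<subseteq> nodes N - inputs N"
    and weight_nonzero: "(x, y) \<in> edges N \<Longrightarrow> weight N y x \<noteq> 0"
  using nondeg unfolding non_degenerate_def is_gfnn_def by auto

lemma out_weight_nonzero: "w \<in> outputs N \<Longrightarrow> \<exists>r<D. out_weight N r w \<noteq> 0"
  using nondeg unfolding non_degenerate_def by blast

abbreviation W where "W \<equiv> childs N A"

lemma edge_into_AB_iff: "u \<in> A \<union> B \<Longrightarrow> (x, u) \<in> edges N \<longleftrightarrow> x \<in> P"
  using par_AB unfolding par_def by blast

lemma edge_into_W: "a \<in> A \<Longrightarrow> w \<in> W \<Longrightarrow> (a, w) \<in> edges N"
  using childs_A unfolding par_def by blast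

lemma mem_W_iff: "w \<in> W \<longleftrightarrow> (\<exists>a\<in>A. (a, w) \<in> edges N)"
  unfolding childs_def par_def by blast

lemma P_disjoint: "P \<inter> (A \<union> B) = {}"
  using edge_into_AB_iff no_loop by blast

lemma W_disjoint: "W \<inter> (A \<union> B) = {}"
  using A_nonempty edge_into_W edge_into_AB_iff P_disjoint by blast

lemma P_nonempty: "P \<noteq> {}"
  using A_nonempty A_sub par_AB inputs_eq by fastforce

lemma P_sub: "P \<subseteq> nodes N" and W_sub: "W \<subseteq> nodes N"
  using A_nonempty edge_into_AB_iff edge_into_W edges_sub by blast+

lemma C_disjoint: "C \<inter> (A \<union> B \<union> P \<union> W) = {}"
  using C_fresh A_sub B_sub P_sub W_sub by blast

lemma alpha_A_nonzero:
  assumes "u \<in> A" shows "\<alpha> u \<noteq> 0"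
proof
  assume "\<alpha> u = 0"
  then have "(u, y) \<notin> edges N" for y
    using assms childs_A weight_nonzero mem_W_iff by fastforce
  then have "u \<in> outputs N" using output_if_childless[OF nondeg] A_sub assms by blast
  moreover have "\<forall>r<D. out_weight N r u = 0" if "u \<in> outputs N"
    using outputs_A assms \<open>\<alpha> u = 0\<close> that by auto
  ultimately show False using out_weight_nonzero by blast
qed

lemma alpha_nonzero: "u \<in> A \<union> B \<union> C \<Longrightarrow> \<alpha> u \<noteq> 0"
proof -
  obtain a where "a \<in> A" using A_nonempty by blast
  moreover assume "u \<in> A \<union> B \<union> C"
  ultimately show ?thesis
    using affine_symmetry_coeff_nonzero[OF symmetry, of u a] alpha_A_nonzero by blast
qed

lemma beta_C_nonzero: "c \<in> C \<Longrightarrow> \<beta> c \<noteq> 0"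
  using A_nonempty C_disjoint affine_symmetry_slope_nonzero[OF symmetry] by blast

lemma mu_nonzero: "A \<subseteq> outputs N \<Longrightarrow> \<exists>r<D. \<mu> r \<noteq> 0"
  using A_nonempty outputs_A out_weight_nonzero by fastforce

lemma outputs_if_W_empty: "W = {} \<Longrightarrow> A \<subseteq> outputs N"
  using A_nonempty A_sub output_if_childless[OF nondeg] mem_W_iff outputs_A by blast

definition modified where
  "modified = modify D N A B C P \<zeta> \<alpha> \<beta> \<gamma> \<kappa> \<nu> \<mu>"

lemma nodes_modified: "nodes modified = nodes N - A \<union> C"
  unfolding modified_def modify_def Let_def by simp

lemma edges_modified: "(x, y) \<in> edges modified \<longleftrightarrow>
    (x, y) \<in> edges N \<and> x \<notin> A \<and> y \<notin> A \<and> \<not> (x \<in> B \<and> y \<in> W) \<or>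
    x \<in> P \<and> y \<in> C \<or> x \<in> C \<and> y \<in> W \<or>
    x \<in> B \<and> y \<in> W \<and> ((x, y) \<in> edges N \<longrightarrow> weight N y x - \<alpha> x * \<nu> y \<noteq> 0)"
  unfolding modified_def modify_def Let_def by simp

lemma inputs_modified_iff: "inputs modified = {v \<in> nodes modified. \<forall>u. (u, v) \<notin> edges modified}"
  unfolding modified_def modify_def Let_def by simp

lemma weight_modified: "weight modified y x =
    (if x \<in> C \<and> y \<in> W then - \<alpha> x * \<nu> y
     else if y \<in> C then \<beta> y * \<kappa> x
     else if x \<in> B \<and> y \<in> W then (if (x, y) \<in> edges N then weight N y x else 0) - \<alpha> x * \<nu> y
     else weight N y x)"
  unfolding modified_def modify_def Let_def by simp

lemma out_weight_modified: "out_weight modified r u =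
    (if A \<subseteq> outputs N then
       (if u \<in> C then - \<alpha> u * \<mu> r
        else if u \<in> B then (if u \<in> outputs N then out_weight N r u else 0) - \<alpha> u * \<mu> r
        else out_weight N r u)
     else out_weight N r u)"
  unfolding modified_def modify_def Let_def by simp

lemma outputs_modified: "outputs modified =
    (if A \<subseteq> outputs N
     then outputs N - (A \<union> B) \<union> C \<union> {u \<in> B. \<exists>r<D. out_weight modified r u \<noteq> 0}
     else outputs N)"
  unfolding modified_def modify_def Let_def by simp

lemma finite_edges: "finite (edges N)"
  using finite_nodes edges_sub finite_subset by blast

lemma acyclic_modified: "acyclic (edges modified)"
proof -
  obtain a where a: "a \<in> A" using A_nonempty by blast
  \<comment> \<open>Nodes of C inherit the rank of A; nodes of B share it because they have the same parents.\<close>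
  define rank where "rank x = card {z. (z, if x \<in> C then a else x) \<in> (edges N)\<^sup>+}" for x
  have less: "rank x < rank y" if "(x', y') \<in> edges N"
    "x' = (if x \<in> C then a else x)" "y' = (if y \<in> C then a else y)" for x y x' y'
    using card_ancestors_less[OF finite_edges acyclic_edges that(1)] that(2,3)
    unfolding rank_def by simp
  have "a \<notin> C" using a C_disjoint by blast
  have "rank x < rank y" if "(x, y) \<in> edges modified" for x y
    using that unfolding edges_modified
  proof (elim disjE conjE)
    assume "(x, y) \<in> edges N"
    moreover have "x \<notin> C" "y \<notin> C" using calculation C_fresh edges_sub by auto
    ultimately show ?thesis by (intro less) auto
  next
    assume "x \<in> P" "y \<in> C"
    moreover have "x \<notin> C" "(x, a) \<in> edges N" using calculation a C_disjoint edge_into_AB_iff by auto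
    ultimately show ?thesis by (intro less) auto
  next
    assume "x \<in> C" "y \<in> W"
    moreover have "y \<notin> C" "(a, y) \<in> edges N" using calculation a C_disjoint edge_into_W by auto
    ultimately show ?thesis by (intro less) (auto simp: \<open>a \<notin> C\<close>)
  next
    assume "x \<in> B" "y \<in> W"
    have "{z. (z, x) \<in> (edges N)\<^sup>+} = {z. (z, a) \<in> (edges N)\<^sup>+}"
      by (rule ancestors_eq_if_parents_eq) (use edge_into_AB_iff \<open>x \<in> B\<close> a in blast)
    then have "rank x = rank a"
      using \<open>x \<in> B\<close> \<open>a \<notin> C\<close> C_disjoint unfolding rank_def by auto
    moreover have "y \<notin> C" "(a, y) \<in> edges N" using \<open>y \<in> W\<close> a C_disjoint edge_into_W by auto
    ultimately show ?thesis using less[of a y a y] \<open>a \<notin> C\<close> by simp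
  qed
  then show ?thesis
    using acyclicI_order[of "(edges modified)\<inverse>" rank] acyclic_converse by blast
qed

lemma edges_modified_sub: "edges modified \<subseteq> nodes modified \<times> nodes modified"
proof -
  have "x \<in> nodes N - A \<union> C \<and> y \<in> nodes N - A \<union> C" if "(x, y) \<in> edges modified" for x y
    using that unfolding edges_modified
  proof (elim disjE conjE)
    assume "(x, y) \<in> edges N" "x \<notin> A" "y \<notin> A"
    then show ?thesis using edges_sub by blast
  next
    assume "x \<in> P" "y \<in> C"
    then show ?thesis using P_sub P_disjoint by blast
  next
    assume "x \<in> C" "y \<in> W"
    then show ?thesis using W_sub W_disjoint by blast
  next
    assume "x \<in> B" "y \<in> W"
    then show ?thesis using B_sub AB_disjoint W_sub W_disjoint by blast
  qed
  then show ?thesis unfolding nodes_modified by auto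
qed

lemma finite_edges_modified: "finite (edges modified)"
  using edges_modified_sub finite_nodes finite_C nodes_modified finite_subset by fastforce

lemma inputs_modified: "inputs modified = inputs N"
proof (intro equalityI subsetI)
  fix v assume v: "v \<in> inputs modified"
  have "v \<notin> C"
  proof
    assume "v \<in> C"
    moreover obtain p where "p \<in> P" using P_nonempty by blast
    ultimately have "(p, v) \<in> edges modified" unfolding edges_modified by blast
    then show False using v unfolding inputs_modified_iff by blast
  qed
  then have "v \<in> nodes N - A" using v unfolding inputs_modified_iff nodes_modified by blast
  have "(x, v) \<notin> edges N" for x
  proof
    assume x: "(x, v) \<in> edges N"
    have "\<exists>u. (u, v) \<in> edges modified"
    proof (cases "v \<in> W")
      case True
      then show ?thesis using C_nonempty unfolding edges_modified by blast
    next
      case False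
      then have "x \<notin> A" using x mem_W_iff by blast
      then show ?thesis using x False \<open>v \<in> nodes N - A\<close> unfolding edges_modified by blast
    qed
    then show False using v unfolding inputs_modified_iff by blast
  qed
  then show "v \<in> inputs N" using \<open>v \<in> nodes N - A\<close> inputs_eq unfolding par_def by blast
next
  fix v assume v: "v \<in> inputs N"
  then have parents: "(x, v) \<notin> edges N" for x using inputs_eq unfolding par_def by blast
  have "v \<in> nodes N" "v \<notin> A" "v \<notin> C" "v \<notin> W"
    using v parents inputs_eq A_sub C_fresh mem_W_iff by auto
  then show "v \<in> inputs modified"
    using parents unfolding inputs_modified_iff nodes_modified edges_modified by blast
qed


lemma weight_modified_nonzero:
  assumes "(x, y) \<in> edges modified" shows "weight modified y x \<noteq> 0"
  using assms unfolding edges_modified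
proof (elim disjE conjE)
  assume "(x, y) \<in> edges N" "x \<notin> A" "y \<notin> A" "\<not> (x \<in> B \<and> y \<in> W)"
  moreover have "x \<notin> C" "y \<notin> C" using calculation(1) C_fresh edges_sub by auto
  ultimately show ?thesis using weight_nonzero unfolding weight_modified by auto
next
  assume "x \<in> P" "y \<in> C"
  moreover have "x \<notin> C" using calculation C_disjoint by blast
  ultimately show ?thesis using kappa_nonzero beta_C_nonzero unfolding weight_modified by simp
next
  assume "x \<in> C" "y \<in> W"
  then show ?thesis using alpha_nonzero childs_A unfolding weight_modified by simp
next
  assume "x \<in> B" "y \<in> W" "(x, y) \<in> edges N \<longrightarrow> weight N y x - \<alpha> x * \<nu> y \<noteq> 0"
  moreover have "x \<notin> C" "y \<notin> C" using calculation C_disjoint by blast+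
  ultimately show ?thesis using alpha_nonzero childs_A unfolding weight_modified by simp
qed

lemma outputs_modified_sub: "outputs modified \<subseteq> nodes modified - inputs modified"
proof -
  have "outputs modified \<subseteq> outputs N - A \<union> B \<union> C"
    using outputs_A unfolding outputs_modified by auto
  then show ?thesis
    using outputs_sub B_sub AB_disjoint C_fresh inputs_eq unfolding nodes_modified inputs_modified by auto
qed

lemma is_gfnn_modified: "is_gfnn modified"
  unfolding is_gfnn_def
proof (intro conjI)
  show "finite (nodes modified)" using finite_nodes finite_C nodes_modified by simp
  show "\<forall>v. (v, v) \<notin> edges modified" using acyclic_modified unfolding acyclic_def by blast
  show "inputs modified = {v \<in> nodes modified. par modified v = {}}"
    unfolding inputs_modified_iff par_def by blast
  show "\<forall>(v, u)\<in>edges modified. weight modified u v \<noteq> 0" using weight_modified_nonzero by blast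
qed (rule edges_modified_sub acyclic_modified outputs_modified_sub)+

lemma out_weight_modified_nonzero:
  assumes "w \<in> outputs modified" shows "\<exists>r<D. out_weight modified r w \<noteq> 0"
proof (cases "A \<subseteq> outputs N")
  case True
  then consider "w \<in> C" | "w \<in> outputs N - (A \<union> B)" | "\<exists>r<D. out_weight modified r w \<noteq> 0"
    using assms unfolding outputs_modified by auto
  then show ?thesis
  proof cases
    case 1
    then show ?thesis using True mu_nonzero alpha_nonzero unfolding out_weight_modified by auto
  next
    case 2
    then have "w \<notin> C" using outputs_sub C_fresh by blast
    then show ?thesis using 2 True out_weight_nonzero unfolding out_weight_modified by auto
  qed
next
  case False
  then show ?thesis using assms out_weight_nonzero unfolding outputs_modified out_weight_modified by simp
qed

lemma output_modified_if_B:
  assumes "x \<in> B"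
    and "\<not> (if A \<subseteq> outputs N then x \<in> outputs N \<and> (\<forall>r<D. out_weight N r x = \<mu> r * \<alpha> x)
           else x \<notin> outputs N)"
  shows "x \<in> outputs modified"
proof (cases "A \<subseteq> outputs N")
  case A_out: True
  have "x \<notin> C" using assms(1) C_disjoint by blast
  have "\<exists>r<D. out_weight modified r x \<noteq> 0"
  proof (cases "x \<in> outputs N")
    case True
    then obtain r where "r < D" "out_weight N r x \<noteq> \<mu> r * \<alpha> x" using assms(2) A_out by auto
    then show ?thesis
      using A_out True \<open>x \<notin> C\<close> assms(1) unfolding out_weight_modified by (auto simp: mult.commute)
  next
    case False
    obtain r where "r < D" "\<mu> r \<noteq> 0" using mu_nonzero A_out by blast
    then show ?thesis
      using A_out False \<open>x \<notin> C\<close> assms(1) alpha_nonzero unfolding out_weight_modified by auto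
  qed
  then show ?thesis using A_out assms(1) unfolding outputs_modified by simp
next
  case False
  then show ?thesis using assms unfolding outputs_modified by simp
qed

lemma successor_modified_C:
  assumes "c \<in> C" "c \<notin> outputs modified" shows "\<exists>y. (c, y) \<in> edges modified"
proof (cases "W = {}")
  case True
  then show ?thesis using assms outputs_if_W_empty unfolding outputs_modified by simp
next
  case False
  then show ?thesis using assms(1) unfolding edges_modified by blast
qed

lemma successor_modified_B:
  assumes "x \<in> B" "\<not> absorbable D N A \<alpha> \<nu> \<mu> x" "x \<notin> outputs modified"
  shows "\<exists>y. (x, y) \<in> edges modified"
proof -
  consider (other_child) y where "(x, y) \<in> edges N" "y \<notin> W"
    | (uncancelled) w where "w \<in> W" "\<not> ((x, w) \<in> edges N \<and> weight N w x = \<nu> w * \<alpha> x)"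
    | (cancelled) "\<forall>y. (x, y) \<in> edges N \<longrightarrow> y \<in> W"
        "\<forall>w\<in>W. (x, w) \<in> edges N \<and> weight N w x = \<nu> w * \<alpha> x"
    by blast
  then show ?thesis
  proof cases
    case other_child
    moreover have "y \<notin> A" using other_child(1) assms(1) edge_into_AB_iff P_disjoint by blast
    ultimately show ?thesis using assms(1) AB_disjoint unfolding edges_modified by blast
  next
    case uncancelled
    then show ?thesis using assms(1) unfolding edges_modified by (auto simp: mult.commute)
  next
    case cancelled
    then show ?thesis
      using assms output_modified_if_B unfolding absorbable_def by blast
  qed
qed

lemma successor_modified_other:
  assumes "x \<in> nodes N - inputs N - (A \<union> B)" "x \<notin> outputs modified"
  shows "\<exists>y. (x, y) \<in> edges modified"
proof -
  have "x \<notin> outputs N" using assms unfolding outputs_modified by (auto split: if_splits)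
  then obtain y where y: "(x, y) \<in> edges N"
    using assms(1) output_if_childless[OF nondeg] by blast
  show ?thesis
  proof (cases "y \<in> A")
    case True
    then have "x \<in> P" using y edge_into_AB_iff by blast
    then show ?thesis using C_nonempty unfolding edges_modified by blast
  next
    case False
    then show ?thesis using y assms(1) unfolding edges_modified by blast
  qed
qed

theorem non_degenerate_modified:
  assumes "\<forall>u\<in>B. \<not> absorbable D N A \<alpha> \<nu> \<mu> u"
  shows "non_degenerate D modified"
proof -
  let ?S = "nodes modified - inputs modified"
  have "\<exists>y\<in>?S. (x, y) \<in> edges modified"
    if x: "x \<in> ?S" and not_output: "x \<notin> outputs modified" for x
  proof -
    have "x \<in> C \<or> x \<in> B \<or> x \<in> nodes N - inputs N - (A \<union> B)"
      using x unfolding nodes_modified inputs_modified by blast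
    then obtain y where "(x, y) \<in> edges modified"
      using not_output assms successor_modified_C successor_modified_B successor_modified_other by blast
    moreover from this have "y \<in> ?S" using edges_modified_sub inputs_modified_iff by blast
    ultimately show ?thesis by blast
  qed
  then have "?S \<subseteq> anc modified (outputs modified)"
    using finite_acyclic_reaches[OF finite_edges_modified acyclic_modified] unfolding anc_def by blast
  then show ?thesis
    unfolding non_degenerate_def using is_gfnn_modified out_weight_modified_nonzero by blast
qed

end

theorem lemma4:
  fixes \<rho> :: "real \<Rightarrow> real" and D :: nat and N :: "'v gfnn" and A B C :: "'v set"
  assumes "non_degenerate D N"
    and "nonlinearity \<rho>"
    and "admits_modification \<rho> D N A B C"
  shows "\<exists>Bs \<subseteq> B. \<exists>N'. is_modification \<rho> D N (A \<union> Bs) (B - Bs) C N' \<and> non_degenerate D N'"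
proof -
  obtain P \<zeta> \<alpha> \<beta> \<gamma> \<kappa> \<nu> \<mu> where data: "modification_data \<rho> D N A B C P \<zeta> \<alpha> \<beta> \<gamma> \<kappa> \<nu> \<mu>"
    using assms(3) unfolding admits_modification_def is_modification_iff by blast
  interpret modification_data \<rho> D N A B C P \<zeta> \<alpha> \<beta> \<gamma> \<kappa> \<nu> \<mu> by (rule data)
  define Bs where "Bs = {u \<in> B. absorbable D N A \<alpha> \<nu> \<mu> u}"
  have "Bs \<subseteq> B" and absorbable: "\<forall>u\<in>Bs. absorbable D N A \<alpha> \<nu> \<mu> u"
    unfolding Bs_def by auto
  note data' = modification_data_absorb[OF \<open>Bs \<subseteq> B\<close> absorbable]
  interpret new: nondegenerate_modification \<rho> D N "A \<union> Bs" "B - Bs" C P \<zeta> \<alpha> \<beta> \<gamma> \<kappa> \<nu> \<mu>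
    using data' assms(1) by (simp add: nondegenerate_modification_def nondegenerate_modification_axioms_def)
  have "\<forall>u\<in>B - Bs. \<not> absorbable D N (A \<union> Bs) \<alpha> \<nu> \<mu> u"
    using absorbable_absorb[OF absorbable] unfolding Bs_def by blast
  then have "non_degenerate D new.modified" by (rule new.non_degenerate_modified)
  moreover have "is_modification \<rho> D N (A \<union> Bs) (B - Bs) C new.modified"
    unfolding is_modification_iff new.modified_def using data' by blast
  ultimately show ?thesis using \<open>Bs \<subseteq> B\<close> by blast
qed

end
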